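(* Let $G$ be a finite connected groupoid with $G_0=\{e_1,\dots,e_r\}$, $A=\bigoplus_{i=1}^r A_i$ a unital ring with $A_i:=A_{e_i}$ having identity $1_i$, and $\alpha=(A_g,\alpha_g)_{g\in G}$ a unital partial action of $G$ on $A$. Suppose that there exist $a\in C(A)$ and $k\in\{1,\dots,r\}$ with $t_k(a)=1_k$, and that for each $j\in\{1,\dots,r\}$ there exists $g_j\in G(e_k,e_j)$ with $1_{g_j}=1_j$. Then $A\subset A\star_\alpha G$ is a separable extension.
   Context: A groupoid $G$ is a small category in which every morphism is invertible; $G_0$ is its object set (objects identified with identity morphisms), $s,t$ source and target; $gh$ is defined iff $s(g)=t(h)$; $G(e,f)$ is the set of morphisms from $e$ to $f$; $G$ is connected if $G(e,f)\neq\emptyset$ for all $e,f\in G_0$. A unital partial action of $G$ on $A$ is a family $\alpha=(A_g,\alpha_g)_{g\in G}$ where $A_{t(g)}$ is a two-sided ideal of $A$, $A_g=A1_g$ is a two-sided ideal of $A_{t(g)}$ with $1_g$ a central idempotent of $A$, $\alpha_g:A_{g^{-1}}\to A_g$ a ring isomorphism, such that $\alpha_e=\mathrm{id}_{A_e}$ for $e\in G_0$, $\alpha_h^{-1}(A_{g^{-1}}\cap A_h)\subseteq A_{(gh)^{-1}}$ and $\alpha_g(\alpha_h(x))=\alpha_{gh}(x)$ for $x\in\alpha_h^{-1}(A_{g^{-1}}\cap A_h)$, whenever $s(g)=t(h)$. The partial skew groupoid ring $A\star_\alpha G=\bigoplus_{g\in G}A_g\delta_g$ has multiplication $(a_g\delta_g)(b_h\delta_h)=\alpha_g(\alpha_{g^{-1}}(a_g)b_h)\delta_{gh}$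 if $s(g)=t(h)$ and $0$ otherwise; it is unital with $1=\sum_{e\in G_0}1_e\delta_e$, and $A$ is regarded as a subring via $a\mapsto\sum_{e\in G_0}(a1_e)\delta_e$. Trace maps: $t_{i,j}(a)=\sum_{g\in G(e_i,e_j)}\alpha_g(a1_{g^{-1}})$ and $t_j(a)=\sum_{i=1}^r t_{i,j}(a)$. $C(A)$ is the center of $A$. A ring extension $R\subseteq S$ is separable if the multiplication map $S\otimes_R S\to S$ splits as a map of $(S,S)$-bimodules; equivalently there exists $x\in S\otimes_R S$ with $m(x)=1_S$ and $sx=xs$ for all $s\in S$. *)

theory Defs
  imports Main
begin

text \<open>A groupoid is given by its set of morphisms G, its set of objects G0
(identified with identity morphisms, so G0 is a subset of G), source, target,
composition cmp g h (defined when src g = tgt h) and inverse.\<close>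

definition groupoid ::
  "'g set \<Rightarrow> 'g set \<Rightarrow> ('g \<Rightarrow> 'g) \<Rightarrow> ('g \<Rightarrow> 'g) \<Rightarrow> ('g \<Rightarrow> 'g \<Rightarrow> 'g) \<Rightarrow> ('g \<Rightarrow> 'g) \<Rightarrow> bool"
where
  "groupoid G G0 src tgt cmp ginv \<longleftrightarrow>
     G0 \<subseteq> G \<and>
     (\<forall>g\<in>G. src g \<in> G0 \<and> tgt g \<in> G0) \<and>
     (\<forall>e\<in>G0. src e = e \<and> tgt e = e) \<and>
     (\<forall>g\<in>G. \<forall>h\<in>G. src g = tgt h \<longrightarrow>
          cmp g h \<in> G \<and> src (cmp g h) = src h \<and> tgt (cmp g h) = tgt g) \<and>
     (\<forall>g\<in>G. \<forall>h\<in>G. \<forall>k\<in>G. src g = tgt h \<longrightarrow> src h = tgt k \<longrightarrow>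
          cmp (cmp g h) k = cmp g (cmp h k)) \<and>
     (\<forall>g\<in>G. cmp (tgt g) g = g \<and> cmp g (src g) = g) \<and>
     (\<forall>g\<in>G. ginv g \<in> G \<and> src (ginv g) = tgt g \<and> tgt (ginv g) = src g \<and>
          cmp g (ginv g) = tgt g \<and> cmp (ginv g) g = src g)"

definition hom_set :: "'g set \<Rightarrow> ('g \<Rightarrow> 'g) \<Rightarrow> ('g \<Rightarrow> 'g) \<Rightarrow> 'g \<Rightarrow> 'g \<Rightarrow> 'g set" where
  "hom_set G src tgt e f = {g \<in> G. src g = e \<and> tgt g = f}"

definition connected_groupoid ::
  "'g set \<Rightarrow> 'g set \<Rightarrow> ('g \<Rightarrow> 'g) \<Rightarrow> ('g \<Rightarrow> 'g) \<Rightarrow> bool" where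
  "connected_groupoid G G0 src tgt \<longleftrightarrow> (\<forall>e\<in>G0. \<forall>f\<in>G0. hom_set G src tgt e f \<noteq> {})"

definition ideal_of :: "('g \<Rightarrow> 'a::ring_1) \<Rightarrow> 'g \<Rightarrow> 'a set" where
  "ideal_of one g = {x * one g | x. True}"

definition central :: "'a::ring_1 \<Rightarrow> bool" where
  "central c \<longleftrightarrow> (\<forall>x. c * x = x * c)"

text \<open>Unital partial action (A_g, alpha_g) of the groupoid on the ring A (the type 'a),
with A_g = A 1_g; \<open>one g\<close> is 1_g.\<close>
definition unital_partial_action ::
  "'g set \<Rightarrow> 'g set \<Rightarrow> ('g \<Rightarrow> 'g) \<Rightarrow> ('g \<Rightarrow> 'g) \<Rightarrow> ('g \<Rightarrow> 'g \<Rightarrow> 'g) \<Rightarrow> ('g \<Rightarrow> 'g)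
   \<Rightarrow> ('g \<Rightarrow> 'a::ring_1) \<Rightarrow> ('g \<Rightarrow> 'a \<Rightarrow> 'a) \<Rightarrow> bool"
where
  "unital_partial_action G G0 src tgt cmp ginv one alpha \<longleftrightarrow>
     (\<forall>g\<in>G. central (one g) \<and> one g * one g = one g) \<and>
     \<comment> \<open>A_g is an ideal of A_{t(g)} (A_{t(g)} is an ideal of A since 1_{t(g)} is central)\<close>
     (\<forall>g\<in>G. ideal_of one g \<subseteq> ideal_of one (tgt g)) \<and>
     \<comment> \<open>alpha_g : A_{g^-1} -> A_g is a ring isomorphism\<close>
     (\<forall>g\<in>G. bij_betw (alpha g) (ideal_of one (ginv g)) (ideal_of one g) \<and>
        (\<forall>x\<in>ideal_of one (ginv g). \<forall>y\<in>ideal_of one (ginv g).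
            alpha g (x + y) = alpha g x + alpha g y \<and> alpha g (x * y) = alpha g x * alpha g y) \<and>
        alpha g (one (ginv g)) = one g) \<and>
     (\<forall>e\<in>G0. \<forall>x\<in>ideal_of one e. alpha e x = x) \<and>
     (\<forall>g\<in>G. \<forall>h\<in>G. src g = tgt h \<longrightarrow>
        (\<forall>x\<in>ideal_of one (ginv h). alpha h x \<in> ideal_of one (ginv g) \<longrightarrow>
           x \<in> ideal_of one (ginv (cmp g h)) \<and> alpha g (alpha h x) = alpha (cmp g h) x))"

text \<open>A is the direct sum of the ideals A_e, e in G0.\<close>
definition direct_sum_decomp :: "'g set \<Rightarrow> ('g \<Rightarrow> 'a::ring_1) \<Rightarrow> bool" where
  "direct_sum_decomp G0 one \<longleftrightarrow>
     (\<Sum>e\<in>G0. one e) = 1 \<and> (\<forall>e\<in>G0. \<forall>f\<in>G0. e \<noteq> f \<longrightarrow> one e * one f = 0)"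

definition trace_ij ::
  "'g set \<Rightarrow> ('g \<Rightarrow> 'g) \<Rightarrow> ('g \<Rightarrow> 'g) \<Rightarrow> ('g \<Rightarrow> 'g) \<Rightarrow> ('g \<Rightarrow> 'a::ring_1) \<Rightarrow> ('g \<Rightarrow> 'a \<Rightarrow> 'a)
   \<Rightarrow> 'g \<Rightarrow> 'g \<Rightarrow> 'a \<Rightarrow> 'a" where
  "trace_ij G src tgt ginv one alpha ei ej a =
     (\<Sum>g\<in>hom_set G src tgt ei ej. alpha g (a * one (ginv g)))"

definition trace_j ::
  "'g set \<Rightarrow> 'g set \<Rightarrow> ('g \<Rightarrow> 'g) \<Rightarrow> ('g \<Rightarrow> 'g) \<Rightarrow> ('g \<Rightarrow> 'g) \<Rightarrow> ('g \<Rightarrow> 'a::ring_1) \<Rightarrow> ('g \<Rightarrow> 'a \<Rightarrow> 'a)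
   \<Rightarrow> 'g \<Rightarrow> 'a \<Rightarrow> 'a" where
  "trace_j G G0 src tgt ginv one alpha ej a =
     (\<Sum>ei\<in>G0. trace_ij G src tgt ginv one alpha ei ej a)"

text \<open>Elements of A \<star> G are represented as functions f with f g \<in> A_g for g \<in> G
and f g = 0 otherwise (f = sum of (f g) delta_g; G is finite).\<close>
definition skew_carrier :: "'g set \<Rightarrow> ('g \<Rightarrow> 'a::ring_1) \<Rightarrow> ('g \<Rightarrow> 'a) set" where
  "skew_carrier G one = {f. (\<forall>g\<in>G. f g \<in> ideal_of one g) \<and> (\<forall>g. g \<notin> G \<longrightarrow> f g = 0)}"

definition skew_add :: "('g \<Rightarrow> 'a::ring_1) \<Rightarrow> ('g \<Rightarrow> 'a) \<Rightarrow> ('g \<Rightarrow> 'a)" where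
  "skew_add f h = (\<lambda>g. f g + h g)"

definition skew_zero :: "'g \<Rightarrow> 'a::ring_1" where
  "skew_zero = (\<lambda>g. 0)"

definition skew_mult ::
  "'g set \<Rightarrow> ('g \<Rightarrow> 'g) \<Rightarrow> ('g \<Rightarrow> 'g) \<Rightarrow> ('g \<Rightarrow> 'g \<Rightarrow> 'g) \<Rightarrow> ('g \<Rightarrow> 'g) \<Rightarrow> ('g \<Rightarrow> 'a::ring_1 \<Rightarrow> 'a)
   \<Rightarrow> ('g \<Rightarrow> 'a) \<Rightarrow> ('g \<Rightarrow> 'a) \<Rightarrow> ('g \<Rightarrow> 'a)" where
  "skew_mult G src tgt cmp ginv alpha f h =
     (\<lambda>k. \<Sum>p\<in>{p \<in> G \<times> G. src (fst p) = tgt (snd p) \<and> cmp (fst p) (snd p) = k}.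
            alpha (fst p) (alpha (ginv (fst p)) (f (fst p)) * h (snd p)))"

definition skew_one :: "'g set \<Rightarrow> ('g \<Rightarrow> 'a::ring_1) \<Rightarrow> ('g \<Rightarrow> 'a)" where
  "skew_one G0 one = (\<lambda>g. if g \<in> G0 then one g else 0)"

text \<open>A regarded as a subring: a \<mapsto> sum over e in G0 of (a 1_e) delta_e.\<close>
definition skew_embed :: "'g set \<Rightarrow> ('g \<Rightarrow> 'a::ring_1) \<Rightarrow> 'a \<Rightarrow> ('g \<Rightarrow> 'a)" where
  "skew_embed G0 one a = (\<lambda>g. if g \<in> G0 then a * one g else 0)"

text \<open>The tensor product S \<otimes>_R S is the free abelian group on S \<times> S modulo the subgroup
generated by the biadditivity and R-balancedness relations. A formal sum is a
function S \<times> S \<Rightarrow> int (finitely supported); an element of S \<otimes>_R S is represented by a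
list of pairs [(x_1,y_1),...,(x_n,y_n)] standing for x_1 \<otimes> y_1 + ... + x_n \<otimes> y_n.\<close>

definition delta2 :: "'s \<times> 's \<Rightarrow> ('s \<times> 's \<Rightarrow> int)" where
  "delta2 p = (\<lambda>q. if q = p then 1 else 0)"

inductive_set tensor_rel ::
  "'s set \<Rightarrow> 's set \<Rightarrow> ('s \<Rightarrow> 's \<Rightarrow> 's) \<Rightarrow> ('s \<Rightarrow> 's \<Rightarrow> 's) \<Rightarrow> ('s \<times> 's \<Rightarrow> int) set"
  for S R add mul
where
  zero: "(\<lambda>_. 0) \<in> tensor_rel S R add mul"
| add_left: "x \<in> S \<Longrightarrow> x' \<in> S \<Longrightarrow> y \<in> S \<Longrightarrow>
     delta2 (add x x', y) - delta2 (x, y) - delta2 (x', y) \<in> tensor_rel S R add mul"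
| add_right: "x \<in> S \<Longrightarrow> y \<in> S \<Longrightarrow> y' \<in> S \<Longrightarrow>
     delta2 (x, add y y') - delta2 (x, y) - delta2 (x, y') \<in> tensor_rel S R add mul"
| balanced: "x \<in> S \<Longrightarrow> y \<in> S \<Longrightarrow> r \<in> R \<Longrightarrow>
     delta2 (mul x r, y) - delta2 (x, mul r y) \<in> tensor_rel S R add mul"
| diff: "u \<in> tensor_rel S R add mul \<Longrightarrow> v \<in> tensor_rel S R add mul \<Longrightarrow>
     u - v \<in> tensor_rel S R add mul"

definition formal_sum :: "('s \<times> 's) list \<Rightarrow> ('s \<times> 's \<Rightarrow> int)" where
  "formal_sum xs = (\<lambda>p. int (count_list xs p))"

definition tensor_eq ::
  "'s set \<Rightarrow> 's set \<Rightarrow> ('s \<Rightarrow> 's \<Rightarrow> 's) \<Rightarrow> ('s \<Rightarrow> 's \<Rightarrow> 's) \<Rightarrow> ('s \<times> 's) list \<Rightarrow> ('s \<times> 's) list \<Rightarrow> bool"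
where
  "tensor_eq S R add mul xs ys \<longleftrightarrow> formal_sum xs - formal_sum ys \<in> tensor_rel S R add mul"

definition tensor_mult_map ::
  "('s \<Rightarrow> 's \<Rightarrow> 's) \<Rightarrow> ('s \<Rightarrow> 's \<Rightarrow> 's) \<Rightarrow> 's \<Rightarrow> ('s \<times> 's) list \<Rightarrow> 's" where
  "tensor_mult_map add mul zero xs = foldr (\<lambda>p acc. add (mul (fst p) (snd p)) acc) xs zero"

definition separable_extension ::
  "'s set \<Rightarrow> ('s \<Rightarrow> 's \<Rightarrow> 's) \<Rightarrow> ('s \<Rightarrow> 's \<Rightarrow> 's) \<Rightarrow> 's \<Rightarrow> 's \<Rightarrow> 's set \<Rightarrow> bool" where
  "separable_extension S add mul zero one R \<longleftrightarrow>
     (\<exists>xs. set xs \<subseteq> S \<times> S \<and> tensor_mult_map add mul zero xs = one \<and>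
        (\<forall>s\<in>S. tensor_eq S R add mul
                  (map (\<lambda>p. (mul s (fst p), snd p)) xs)
                  (map (\<lambda>p. (fst p, mul (snd p) s)) xs)))"

end

theory Submission
  imports Defs "HOL-Library.Function_Algebras"
begin

text \<open>
With b_g = alpha_g(a 1_{g^-1}) (trace_coeff a g), the element
  x = sum over g of b_g delta_g \<otimes> 1_{g^-1} delta_{g^-1}
is a separability idempotent. Its product m(x) is the sum over objects e of t_e(a) delta_e, and
t_e(a) = 1_e follows by transporting t_k(a) = 1_k along g_e, since alpha_{g_e} maps
b_h 1_{g_e^-1} to b_{g_e h}. For s in the skew ring, s x and x s are both congruent in the
tensor product to the double sum over pairs (g, h) with common target of
(s_h b_g) delta_g \<otimes> 1_{g^-1 h} delta_{g^-1 h}: for s x this is a reindexing of the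
composable pairs; for x s the coefficient alpha_{g^-1}(1_g s_h) lies in A, so it moves across
the tensor sign, and centrality of b_g finishes.
\<close>

locale groupoid_struct =
  fixes G G0 :: "'g set"
    and src tgt :: "'g \<Rightarrow> 'g"
    and cmp :: "'g \<Rightarrow> 'g \<Rightarrow> 'g"
    and ginv :: "'g \<Rightarrow> 'g"
  assumes groupoid: "groupoid G G0 src tgt cmp ginv"
begin

lemma G0_subset: "G0 \<subseteq> G"
  using groupoid unfolding groupoid_def by blast

lemma obj_in: "e \<in> G0 \<Longrightarrow> e \<in> G"
  using G0_subset by blast

lemma src_in: "g \<in> G \<Longrightarrow> src g \<in> G0"
  using groupoid unfolding groupoid_def by blast

lemma tgt_in: "g \<in> G \<Longrightarrow> tgt g \<in> G0"
  using groupoid unfolding groupoid_def by blast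

lemma src_obj: "e \<in> G0 \<Longrightarrow> src e = e"
  using groupoid unfolding groupoid_def by blast

lemma tgt_obj: "e \<in> G0 \<Longrightarrow> tgt e = e"
  using groupoid unfolding groupoid_def by blast

lemma cmp_in: "g \<in> G \<Longrightarrow> h \<in> G \<Longrightarrow> src g = tgt h \<Longrightarrow> cmp g h \<in> G"
  using groupoid unfolding groupoid_def by blast

lemma src_cmp: "g \<in> G \<Longrightarrow> h \<in> G \<Longrightarrow> src g = tgt h \<Longrightarrow> src (cmp g h) = src h"
  using groupoid unfolding groupoid_def by blast

lemma tgt_cmp: "g \<in> G \<Longrightarrow> h \<in> G \<Longrightarrow> src g = tgt h \<Longrightarrow> tgt (cmp g h) = tgt g"
  using groupoid unfolding groupoid_def by blast

lemma cmp_assoc: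
  "g \<in> G \<Longrightarrow> h \<in> G \<Longrightarrow> k \<in> G \<Longrightarrow> src g = tgt h \<Longrightarrow> src h = tgt k \<Longrightarrow>
   cmp (cmp g h) k = cmp g (cmp h k)"
  using groupoid unfolding groupoid_def by blast

lemma cmp_tgt_left: "g \<in> G \<Longrightarrow> cmp (tgt g) g = g"
  using groupoid unfolding groupoid_def by blast

lemma cmp_src_right: "g \<in> G \<Longrightarrow> cmp g (src g) = g"
  using groupoid unfolding groupoid_def by blast

lemma ginv_in: "g \<in> G \<Longrightarrow> ginv g \<in> G"
  using groupoid unfolding groupoid_def by blast

lemma src_ginv: "g \<in> G \<Longrightarrow> src (ginv g) = tgt g"
  using groupoid unfolding groupoid_def by blast

lemma tgt_ginv: "g \<in> G \<Longrightarrow> tgt (ginv g) = src g"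
  using groupoid unfolding groupoid_def by blast

lemma cmp_ginv_right: "g \<in> G \<Longrightarrow> cmp g (ginv g) = tgt g"
  using groupoid unfolding groupoid_def by blast

lemma cmp_ginv_left: "g \<in> G \<Longrightarrow> cmp (ginv g) g = src g"
  using groupoid unfolding groupoid_def by blast

lemma ginv_unique:
  assumes u: "u \<in> G" and v: "v \<in> G" and st: "src u = tgt v" and uv: "cmp u v = src v"
  shows "u = ginv v"
proof -
  have "u = cmp u (cmp v (ginv v))"
    using cmp_src_right[OF u] st cmp_ginv_right[OF v] by simp
  also have "\<dots> = cmp (cmp u v) (ginv v)"
    using cmp_assoc[OF u v ginv_in[OF v]] st tgt_ginv[OF v] by simp
  also have "\<dots> = ginv v"
    using uv tgt_ginv[OF v] cmp_tgt_left[OF ginv_in[OF v]] by simp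
  finally show ?thesis .
qed

lemma ginv_ginv: "g \<in> G \<Longrightarrow> ginv (ginv g) = g"
  by (metis ginv_unique ginv_in cmp_ginv_right src_ginv tgt_ginv)

lemma ginv_obj: "e \<in> G0 \<Longrightarrow> ginv e = e"
  by (metis obj_in cmp_tgt_left ginv_unique src_obj tgt_obj)

lemma ginv_cmp:
  assumes g: "g \<in> G" and h: "h \<in> G" and st: "src g = tgt h"
  shows "ginv (cmp g h) = cmp (ginv h) (ginv g)"
proof -
  have "cmp (cmp (ginv h) (ginv g)) (cmp g h) = cmp (ginv h) (cmp (cmp (ginv g) g) h)"
    using cmp_assoc ginv_in g h st cmp_in src_ginv tgt_ginv tgt_cmp by auto
  also have "\<dots> = src (cmp g h)"
    using cmp_ginv_left g h st cmp_tgt_left src_cmp by auto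
  finally show ?thesis
    by (metis assms cmp_in ginv_in src_cmp src_ginv tgt_cmp tgt_ginv ginv_unique)
qed

lemma cmp_ginv_cancel_left: "h \<in> G \<Longrightarrow> l \<in> G \<Longrightarrow> src h = tgt l \<Longrightarrow> cmp (ginv h) (cmp h l) = l"
  by (metis cmp_assoc cmp_tgt_left ginv_in cmp_ginv_left src_ginv)

lemma cmp_ginv_cancel_left':
  "h \<in> G \<Longrightarrow> l \<in> G \<Longrightarrow> tgt h = tgt l \<Longrightarrow> cmp h (cmp (ginv h) l) = l"
  using cmp_ginv_cancel_left[of "ginv h" l] ginv_in ginv_ginv src_ginv by simp

lemma ginv_cmp_cmp:
  assumes g: "g \<in> G" and h: "h \<in> G" and st: "src h = tgt g"
  shows "cmp (ginv (cmp h g)) h = ginv g"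
proof -
  have "cmp (ginv (cmp h g)) h = cmp (ginv g) (cmp (ginv h) h)"
    using ginv_cmp[OF h g st] cmp_assoc[OF ginv_in[OF g] ginv_in[OF h] h]
      src_ginv[OF g] src_ginv[OF h] tgt_ginv[OF h] st by simp
  then show ?thesis
    using cmp_ginv_left[OF h] st src_ginv[OF g] cmp_src_right[OF ginv_in[OF g]] by simp
qed

lemma sum_reindex_cmp_left:
  assumes g: "g \<in> G"
  shows "(\<Sum>h\<in>{h\<in>G. tgt h = src g}. f (cmp g h)) = (\<Sum>l\<in>{l\<in>G. tgt l = tgt g}. f l)"
proof (rule sum.reindex_bij_witness[where i = "cmp (ginv g)" and j = "cmp g"])
  fix l assume "l \<in> {l\<in>G. tgt l = tgt g}"
  then show "cmp g (cmp (ginv g) l) = l" and "cmp (ginv g) l \<in> {h\<in>G. tgt h = src g}"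
    using cmp_ginv_cancel_left' g cmp_in ginv_in tgt_cmp src_ginv tgt_ginv by auto
qed (use g cmp_ginv_cancel_left cmp_in tgt_cmp in auto)

lemma sum_composable_reindex:
  assumes "finite G"
  shows "(\<Sum>g\<in>G. \<Sum>h\<in>{h\<in>G. src h = tgt g}. F (cmp h g) h)
       = (\<Sum>g\<in>G. \<Sum>h\<in>{h\<in>G. tgt h = tgt g}. F g h)"
proof -
  have "(\<Sum>g\<in>G. \<Sum>h\<in>{h\<in>G. src h = tgt g}. F (cmp h g) h)
      = (\<Sum>(g,h)\<in>(SIGMA g:G. {h\<in>G. src h = tgt g}). F (cmp h g) h)"
    by (rule sum.Sigma) (use assms in auto)
  also have "\<dots> = (\<Sum>(g,h)\<in>(SIGMA g:G. {h\<in>G. tgt h = tgt g}). F g h)"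
  proof (rule sum.reindex_bij_witness[where i = "\<lambda>(g,h). (cmp (ginv h) g, h)"
                                         and j = "\<lambda>(g,h). (cmp h g, h)"])
    fix p assume "p \<in> (SIGMA g:G. {h\<in>G. tgt h = tgt g})"
    then obtain g h where p: "p = (g,h)" "g \<in> G" "h \<in> G" "tgt h = tgt g" by auto
    then show "(case case p of (g, h) \<Rightarrow> (cmp (ginv h) g, h) of (g, h) \<Rightarrow> (cmp h g, h)) = p"
      and "(case p of (g, h) \<Rightarrow> (cmp (ginv h) g, h)) \<in> (SIGMA g:G. {h\<in>G. src h = tgt g})"
      using cmp_ginv_cancel_left' cmp_in ginv_in tgt_cmp src_ginv tgt_ginv by auto
  qed (use cmp_ginv_cancel_left cmp_in tgt_cmp in auto)
  also have "\<dots> = (\<Sum>g\<in>G. \<Sum>h\<in>{h\<in>G. tgt h = tgt g}. F g h)"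
    by (rule sum.Sigma[symmetric]) (use assms in auto)
  finally show ?thesis .
qed

end

section \<open>Unital partial actions\<close>

locale partial_action = groupoid_struct G G0 src tgt cmp ginv
  for G G0 :: "'g set"
    and src tgt :: "'g \<Rightarrow> 'g"
    and cmp :: "'g \<Rightarrow> 'g \<Rightarrow> 'g"
    and ginv :: "'g \<Rightarrow> 'g" +
  fixes one :: "'g \<Rightarrow> 'a::ring_1"
    and alpha :: "'g \<Rightarrow> 'a \<Rightarrow> 'a"
  assumes action: "unital_partial_action G G0 src tgt cmp ginv one alpha"
begin

abbreviation I :: "'g \<Rightarrow> 'a set" where "I g \<equiv> ideal_of one g"

lemma one_central: "g \<in> G \<Longrightarrow> one g * x = x * one g"
  using action unfolding unital_partial_action_def central_def by blast

lemma one_idem: "g \<in> G \<Longrightarrow> one g * one g = one g"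
  using action unfolding unital_partial_action_def by blast

lemma ideal_subset_tgt: "g \<in> G \<Longrightarrow> I g \<subseteq> I (tgt g)"
  using action unfolding unital_partial_action_def by blast

lemma alpha_bij: "g \<in> G \<Longrightarrow> bij_betw (alpha g) (I (ginv g)) (I g)"
  using action unfolding unital_partial_action_def by blast

lemma alpha_add:
  "g \<in> G \<Longrightarrow> x \<in> I (ginv g) \<Longrightarrow> y \<in> I (ginv g) \<Longrightarrow> alpha g (x + y) = alpha g x + alpha g y"
  using action unfolding unital_partial_action_def by blast

lemma alpha_mult:
  "g \<in> G \<Longrightarrow> x \<in> I (ginv g) \<Longrightarrow> y \<in> I (ginv g) \<Longrightarrow> alpha g (x * y) = alpha g x * alpha g y"
  using action unfolding unital_partial_action_def by blast

lemma alpha_one: "g \<in> G \<Longrightarrow> alpha g (one (ginv g)) = one g"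
  using action unfolding unital_partial_action_def by blast

lemma alpha_obj: "e \<in> G0 \<Longrightarrow> x \<in> I e \<Longrightarrow> alpha e x = x"
  using action unfolding unital_partial_action_def by blast

lemma alpha_cmp:
  "g \<in> G \<Longrightarrow> h \<in> G \<Longrightarrow> src g = tgt h \<Longrightarrow> x \<in> I (ginv h) \<Longrightarrow> alpha h x \<in> I (ginv g) \<Longrightarrow>
   x \<in> I (ginv (cmp g h)) \<and> alpha g (alpha h x) = alpha (cmp g h) x"
  using action unfolding unital_partial_action_def by blast

lemma ideal_iff: "g \<in> G \<Longrightarrow> x \<in> I g \<longleftrightarrow> x * one g = x"
proof
  assume g: "g \<in> G" and "x \<in> I g"
  then obtain y where "x = y * one g" unfolding ideal_of_def by blast
  then show "x * one g = x" using one_idem[OF g] by (simp add: mult.assoc)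
next
  assume "x * one g = x"
  then show "x \<in> I g" unfolding ideal_of_def by (metis (mono_tags, lifting) mem_Collect_eq)
qed

lemma one_in_ideal: "g \<in> G \<Longrightarrow> one g \<in> I g"
  using ideal_iff one_idem by blast

lemma ones_central:
  assumes p: "p \<in> G" and q: "q \<in> G"
  shows "one p * one q * x = x * (one p * one q)"
proof -
  have "one p * one q * x = one p * (x * one q)"
    using one_central[OF q, of x] by (simp add: mult.assoc)
  also have "\<dots> = x * (one p * one q)"
    using one_central[OF p, of x] by (simp add: mult.assoc[symmetric])
  finally show ?thesis .
qed

lemma ideal_mult_right: "g \<in> G \<Longrightarrow> x \<in> I g \<Longrightarrow> x * y \<in> I g"
proof -
  assume g: "g \<in> G" and x: "x \<in> I g"
  have "x * y * one g = x * one g * y" using one_central[OF g, of y] by (simp add: mult.assoc)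
  then show ?thesis using ideal_iff[OF g] x by simp
qed

lemma ideal_mult_left: "g \<in> G \<Longrightarrow> x \<in> I g \<Longrightarrow> y * x \<in> I g"
  using ideal_iff by (simp add: mult.assoc)

lemma mult_one_in_ideal: "g \<in> G \<Longrightarrow> y * one g \<in> I g"
  using ideal_mult_left one_in_ideal by blast

lemma ideal_add: "g \<in> G \<Longrightarrow> x \<in> I g \<Longrightarrow> y \<in> I g \<Longrightarrow> x + y \<in> I g"
  using ideal_iff by (simp add: distrib_right)

lemma ideal_zero: "g \<in> G \<Longrightarrow> 0 \<in> I g"
  using ideal_iff by simp

lemma ideal_sum:
  assumes g: "g \<in> G" and A: "finite A" and f: "\<And>i. i \<in> A \<Longrightarrow> f i \<in> I g"
  shows "sum f A \<in> I g"
  using A f by (induction A rule: finite_induct) (simp_all add: ideal_add ideal_zero g)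

lemma ideal_ginv_subset_src: "g \<in> G \<Longrightarrow> x \<in> I (ginv g) \<Longrightarrow> x \<in> I (src g)"
  using ideal_subset_tgt[of "ginv g"] ginv_in tgt_ginv by auto

lemma mult_ones_absorb: "p \<in> G \<Longrightarrow> q \<in> G \<Longrightarrow> x \<in> I p \<Longrightarrow> x \<in> I q \<Longrightarrow> x * (one p * one q) = x"
  using ideal_iff by (simp add: mult.assoc[symmetric])

lemma alpha_in: "g \<in> G \<Longrightarrow> x \<in> I (ginv g) \<Longrightarrow> alpha g x \<in> I g"
  by (rule bij_betw_apply[OF alpha_bij])

lemma alpha_ginv_in: "g \<in> G \<Longrightarrow> x \<in> I g \<Longrightarrow> alpha (ginv g) x \<in> I (ginv g)"
  using alpha_in[of "ginv g" x] ginv_in ginv_ginv by simp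

lemma alpha_zero: "g \<in> G \<Longrightarrow> alpha g 0 = 0"
  using alpha_add[of g 0 0] ideal_zero ginv_in by simp

lemma alpha_sum:
  assumes g: "g \<in> G"
  shows "finite A \<Longrightarrow> (\<And>i. i \<in> A \<Longrightarrow> f i \<in> I (ginv g)) \<Longrightarrow>
    alpha g (sum f A) = (\<Sum>i\<in>A. alpha g (f i))"
proof (induction A rule: finite_induct)
  case (insert i A)
  have "sum f A \<in> I (ginv g)" using ideal_sum[OF ginv_in[OF g] insert(1)] insert(4) by blast
  then show ?case using insert alpha_add[OF g] by simp
qed (simp add: alpha_zero g)

lemma alpha_alpha_ginv: "g \<in> G \<Longrightarrow> x \<in> I g \<Longrightarrow> alpha g (alpha (ginv g) x) = x"
proof -
  assume g: "g \<in> G" and x: "x \<in> I g"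
  have "alpha g (alpha (ginv g) x) = alpha (cmp g (ginv g)) x"
    using alpha_cmp[OF g ginv_in[OF g], of x] x alpha_ginv_in[OF g x] ginv_ginv[OF g] tgt_ginv[OF g]
    by simp
  also have "\<dots> = x"
    using cmp_ginv_right[OF g] alpha_obj[OF tgt_in[OF g]] ideal_subset_tgt[OF g] x by auto
  finally show ?thesis .
qed

lemma alpha_in_cmp:
  assumes h: "h \<in> G" and l: "l \<in> G" and st: "src h = tgt l"
    and xh: "x \<in> I (ginv h)" and xl: "x \<in> I l"
  shows "alpha (ginv l) x \<in> I (ginv (cmp h l)) \<and> alpha (cmp h l) (alpha (ginv l) x) = alpha h x"
  using alpha_cmp[OF h l st alpha_ginv_in[OF l xl]] alpha_alpha_ginv[OF l xl] xh by simp

lemma alpha_ginv_in_cmp: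
  assumes g: "g \<in> G" and h: "h \<in> G" and t: "tgt h = tgt g" and q: "q \<in> I h"
  shows "alpha (ginv g) (one g * q) \<in> I (cmp (ginv g) h)"
proof -
  have st: "src (ginv g) = tgt h" using src_ginv[OF g] t by simp
  have "one g * q \<in> I (ginv (ginv g))" using ideal_mult_right[OF g one_in_ideal[OF g]] ginv_ginv[OF g] by simp
  from alpha_in_cmp[OF ginv_in[OF g] h st this ideal_mult_left[OF h q]]
  show ?thesis using alpha_in[OF cmp_in[OF ginv_in[OF g] h st]] by metis
qed

lemma alpha_one_mult_one:
  assumes h: "h \<in> G" and l: "l \<in> G" and st: "src h = tgt l"
  shows "alpha h (one l * one (ginv h)) = one h * one (cmp h l)"
proof -
  let ?hl = "cmp h l" and ?e = "alpha h (one l * one (ginv h))" and ?y = "one (cmp h l) * one h"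
  have hl: "?hl \<in> G" using cmp_in h l st by blast
  have hi: "ginv h \<in> G" using ginv_in h by blast
  have eh: "one l * one (ginv h) \<in> I (ginv h)" using mult_one_in_ideal[OF hi] .
  have el: "one l * one (ginv h) \<in> I l" using ideal_mult_right[OF l one_in_ideal[OF l]] .
  obtain x where x: "x \<in> I (ginv ?hl)" and xe: "alpha ?hl x = ?e"
    using alpha_in_cmp[OF h l st eh el] by blast
  have "?e \<in> I ?hl" using alpha_in[OF hl x] xe by simp
  then have e_absorb: "?e * ?y = ?e"
    using mult_ones_absorb[OF hl h _ alpha_in[OF h eh]] by simp
  have yh: "?y \<in> I h" using mult_one_in_ideal[OF h] .
  have yhl: "?y \<in> I ?hl" using ideal_mult_right[OF hl one_in_ideal[OF hl]] .
  \<comment> \<open>the same argument for ginv h and hl, whose composite is l, puts alpha_{h^-1} y into A_l\<close>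
  have st': "src (ginv h) = tgt ?hl" using src_ginv[OF h] tgt_cmp[OF h l st] by simp
  obtain w where "w \<in> I (ginv l)" "alpha l w = alpha (ginv h) ?y"
    using alpha_in_cmp[OF hi hl st' _ yhl] ginv_ginv[OF h] yh cmp_ginv_cancel_left[OF h l st] by auto
  then have "alpha (ginv h) ?y \<in> I l" using alpha_in[OF l] by metis
  then have w_absorb: "alpha (ginv h) ?y * (one l * one (ginv h)) = alpha (ginv h) ?y"
    using mult_ones_absorb[OF l hi] alpha_ginv_in[OF h yh] by blast
  have "?y = alpha h (alpha (ginv h) ?y * (one l * one (ginv h)))"
    using w_absorb alpha_alpha_ginv[OF h yh] by simp
  also have "\<dots> = ?y * ?e"
    using alpha_mult[OF h alpha_ginv_in[OF h yh] eh] alpha_alpha_ginv[OF h yh] by simp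
  also have "\<dots> = ?e * ?y"
    using ones_central[OF hl h] .
  finally show ?thesis using e_absorb one_central[OF hl] by simp
qed

lemma alpha_alpha_restrict:
  assumes h: "h \<in> G" and l: "l \<in> G" and st: "src h = tgt l"
  shows "alpha h (alpha l (z * one (ginv l)) * one (ginv h))
       = alpha (cmp h l) (z * one (ginv (cmp h l))) * one h"
proof -
  let ?hl = "cmp h l" and ?c = "ginv (cmp h l)" and ?zl = "z * one (ginv l)"
    and ?yz = "one l * one (ginv h)"
  let ?x' = "alpha (ginv l) ?yz"
  have hl: "?hl \<in> G" and hi: "ginv h \<in> G" and li: "ginv l \<in> G" and ci: "?c \<in> G"
    using cmp_in ginv_in h l st by auto
  have zl: "?zl \<in> I (ginv l)" using mult_one_in_ideal[OF li] .
  have yzh: "?yz \<in> I (ginv h)" using mult_one_in_ideal[OF hi] .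
  have yzl: "?yz \<in> I l" using ideal_mult_right[OF l one_in_ideal[OF l]] .
  have x'c: "?x' \<in> I ?c" and x'hl: "alpha ?hl ?x' = one h * one ?hl"
    using alpha_in_cmp[OF h l st yzh yzl] alpha_one_mult_one[OF h l st] by auto
  have x'l: "?x' \<in> I (ginv l)" using alpha_ginv_in[OF l yzl] .
  have "alpha l ?zl * one (ginv h) = alpha l ?zl * ?yz"
    using ideal_iff[OF l] alpha_in[OF l zl] by (simp add: mult.assoc[symmetric])
  also have "\<dots> = alpha l (?zl * ?x')"
    using alpha_mult[OF l zl x'l] alpha_alpha_ginv[OF l yzl] by simp
  finally have w: "alpha l ?zl * one (ginv h) = alpha l (?zl * ?x')" .
  have "?zl * ?x' = z * (?x' * one (ginv l))"
    using one_central[OF li] by (simp add: mult.assoc)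
  also have "\<dots> = z * (?x' * one ?c)"
    using ideal_iff[OF li] ideal_iff[OF ci] x'l x'c by simp
  also have "\<dots> = (z * one ?c) * ?x'"
    using one_central[OF ci] by (simp add: mult.assoc)
  finally have zx: "?zl * ?x' = (z * one ?c) * ?x'" .
  have "alpha l (?zl * ?x') \<in> I (ginv h)"
    using w[symmetric] mult_one_in_ideal[OF hi] by simp
  then have "alpha h (alpha l (?zl * ?x')) = alpha ?hl (?zl * ?x')"
    using alpha_cmp[OF h l st ideal_mult_right[OF li zl]] by blast
  also have "\<dots> = alpha ?hl (z * one ?c) * (one h * one ?hl)"
    using zx alpha_mult[OF hl mult_one_in_ideal[OF ci] x'c] x'hl by simp
  also have "\<dots> = alpha ?hl (z * one ?c) * one ?hl * one h"
    using one_central[OF h, of "one ?hl"] by (simp add: mult.assoc)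
  also have "\<dots> = alpha ?hl (z * one ?c) * one h"
    using ideal_iff[OF hl] alpha_in[OF hl mult_one_in_ideal[OF ci]] by simp
  finally show ?thesis using w by simp
qed

lemma alpha_central:
  assumes g: "g \<in> G" and z: "z \<in> I (ginv g)" and zc: "\<And>y. z * y = y * z"
  shows "alpha g z * y = y * alpha g z"
proof -
  let ?v = "alpha g z" and ?q = "alpha (ginv g) (y * one g)"
  have v: "?v \<in> I g" using alpha_in[OF g z] .
  have q: "?q \<in> I (ginv g)" using alpha_ginv_in[OF g mult_one_in_ideal[OF g]] .
  have qq: "alpha g ?q = y * one g" using alpha_alpha_ginv[OF g mult_one_in_ideal[OF g]] .
  have "y * ?v = y * (one g * ?v)"
    using v ideal_iff[OF g] one_central[OF g] by simp
  also have "\<dots> = alpha g ?q * ?v" using qq by (simp add: mult.assoc)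
  also have "\<dots> = alpha g (z * ?q)" using alpha_mult[OF g q z] zc by simp
  also have "\<dots> = ?v * (y * one g)" using alpha_mult[OF g z q] qq by simp
  also have "\<dots> = ?v * one g * y" using one_central[OF g] by (simp add: mult.assoc)
  also have "\<dots> = ?v * y" using v ideal_iff[OF g] by simp
  finally show ?thesis by simp
qed

end

section \<open>The relations of the tensor product\<close>

lemma zero_in_tensor_rel: "0 \<in> tensor_rel S R add mul"
  using tensor_rel.zero[of S R add mul] by (simp add: zero_fun_def)

lemma uminus_in_tensor_rel: "u \<in> tensor_rel S R add mul \<Longrightarrow> - u \<in> tensor_rel S R add mul"
  using tensor_rel.diff[OF zero_in_tensor_rel] by fastforce

lemma add_in_tensor_rel:
  "u \<in> tensor_rel S R add mul \<Longrightarrow> v \<in> tensor_rel S R add mul \<Longrightarrow> u + v \<in> tensor_rel S R add mul"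
  using tensor_rel.diff[of u S R add mul "- v"] uminus_in_tensor_rel[of v] by simp

lemma sum_in_tensor_rel:
  assumes "finite A" "\<And>i. i \<in> A \<Longrightarrow> f i \<in> tensor_rel S R add mul"
  shows "sum f A \<in> tensor_rel S R add mul"
  using assms by (induction A rule: finite_induct) (auto intro: zero_in_tensor_rel add_in_tensor_rel)

lemma tensor_rel_diff_cancel:
  "u - w \<in> tensor_rel S R add mul \<Longrightarrow> v - w \<in> tensor_rel S R add mul \<Longrightarrow> u - v \<in> tensor_rel S R add mul"
  using tensor_rel.diff[of "u - w" S R add mul "v - w"] by (simp only: diff_diff_eq2 diff_add_cancel)

lemma sum_closed:
  assumes "0 \<in> S" "\<And>x y. x \<in> S \<Longrightarrow> y \<in> S \<Longrightarrow> x + y \<in> S"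
    and "finite A" "\<And>i. i \<in> A \<Longrightarrow> x i \<in> S"
  shows "sum x A \<in> S"
  using assms(3,4) by (induction A rule: finite_induct) (auto intro: assms(1,2))

lemma tensor_rel_sum_left:
  fixes S :: "'s::comm_monoid_add set"
  assumes S0: "0 \<in> S" and S_add: "\<And>x y. x \<in> S \<Longrightarrow> y \<in> S \<Longrightarrow> x + y \<in> S"
    and A: "finite A" and x: "\<And>i. i \<in> A \<Longrightarrow> x i \<in> S" and y: "y \<in> S"
  shows "delta2 (sum x A, y) - (\<Sum>i\<in>A. delta2 (x i, y)) \<in> tensor_rel S R (+) mul"
  using A x
proof (induction A rule: finite_induct)
  case empty
  have "delta2 (0 + 0, y) - delta2 (0, y) - delta2 (0, y) \<in> tensor_rel S R (+) mul"
    by (rule tensor_rel.add_left[OF S0 S0 y])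
  then show ?case using uminus_in_tensor_rel by fastforce
next
  case (insert i A)
  have "sum x A \<in> S" using sum_closed[OF S0 S_add insert(1)] insert(4) by simp
  then have "delta2 (x i + sum x A, y) - delta2 (x i, y) - delta2 (sum x A, y)
      \<in> tensor_rel S R (+) mul"
    using tensor_rel.add_left[OF _ _ y] insert(4) by simp
  then have "delta2 (x i + sum x A, y) - delta2 (x i, y) - delta2 (sum x A, y)
      + (delta2 (sum x A, y) - (\<Sum>i\<in>A. delta2 (x i, y))) \<in> tensor_rel S R (+) mul"
    using add_in_tensor_rel insert by blast
  moreover have "delta2 (x i + sum x A, y) - delta2 (x i, y) - delta2 (sum x A, y)
      + (delta2 (sum x A, y) - (\<Sum>i\<in>A. delta2 (x i, y)))
    = delta2 (sum x (insert i A), y) - (\<Sum>i\<in>insert i A. delta2 (x i, y))"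
    using insert(1,2) by (simp add: algebra_simps)
  ultimately show ?case by (simp only:)
qed

lemma tensor_rel_sum_right:
  fixes S :: "'s::comm_monoid_add set"
  assumes S0: "0 \<in> S" and S_add: "\<And>x y. x \<in> S \<Longrightarrow> y \<in> S \<Longrightarrow> x + y \<in> S"
    and A: "finite A" and x: "\<And>i. i \<in> A \<Longrightarrow> x i \<in> S" and y: "y \<in> S"
  shows "delta2 (y, sum x A) - (\<Sum>i\<in>A. delta2 (y, x i)) \<in> tensor_rel S R (+) mul"
  using A x
proof (induction A rule: finite_induct)
  case empty
  have "delta2 (y, 0 + 0) - delta2 (y, 0) - delta2 (y, 0) \<in> tensor_rel S R (+) mul"
    by (rule tensor_rel.add_right[OF y S0 S0])
  then show ?case using uminus_in_tensor_rel by fastforce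
next
  case (insert i A)
  have "sum x A \<in> S" using sum_closed[OF S0 S_add insert(1)] insert(4) by simp
  then have "delta2 (y, x i + sum x A) - delta2 (y, x i) - delta2 (y, sum x A)
      \<in> tensor_rel S R (+) mul"
    using tensor_rel.add_right[OF y] insert(4) by simp
  then have "delta2 (y, x i + sum x A) - delta2 (y, x i) - delta2 (y, sum x A)
      + (delta2 (y, sum x A) - (\<Sum>i\<in>A. delta2 (y, x i))) \<in> tensor_rel S R (+) mul"
    using add_in_tensor_rel insert by blast
  moreover have "delta2 (y, x i + sum x A) - delta2 (y, x i) - delta2 (y, sum x A)
      + (delta2 (y, sum x A) - (\<Sum>i\<in>A. delta2 (y, x i)))
    = delta2 (y, sum x (insert i A)) - (\<Sum>i\<in>insert i A. delta2 (y, x i))"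
    using insert(1,2) by (simp add: algebra_simps)
  ultimately show ?case by (simp only:)
qed

lemma formal_sum_conv_sum_list: "formal_sum xs = sum_list (map delta2 xs)"
proof (induction xs)
  case (Cons p xs)
  have "formal_sum (p # xs) = delta2 p + formal_sum xs"
    by (rule ext) (simp add: formal_sum_def delta2_def)
  then show ?case using Cons by simp
qed (simp add: formal_sum_def zero_fun_def)

section \<open>The partial skew groupoid ring\<close>

definition skew_delta :: "'g \<Rightarrow> 'a::zero \<Rightarrow> 'g \<Rightarrow> 'a" where
  "skew_delta g y = (\<lambda>l. if l = g then y else 0)"

lemma skew_delta_zero [simp]: "skew_delta g 0 = 0"
  unfolding skew_delta_def by (rule ext) simp

lemma skew_add_eq_plus: "skew_add = (+)"
  unfolding skew_add_def by (intro ext) simp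

lemma tensor_mult_map_skew:
  "tensor_mult_map skew_add m skew_zero xs = sum_list (map (\<lambda>p. m (fst p) (snd p)) xs)"
  unfolding tensor_mult_map_def skew_add_eq_plus skew_zero_def by (induction xs) (auto simp: zero_fun_def)

lemma sum_fun_apply: "(sum f A) x = (\<Sum>a\<in>A. f a x)"
  by (induction A rule: infinite_finite_induct) auto

lemma sum_eq_single:
  assumes "finite A" "a \<in> A" "\<And>x. x \<in> A \<Longrightarrow> x \<noteq> a \<Longrightarrow> f x = 0"
  shows "sum f A = f a"
proof -
  have "sum f A = f a + sum f (A - {a})" by (rule sum.remove[OF assms(1,2)])
  also have "sum f (A - {a}) = 0" using assms(3) by (intro sum.neutral) auto
  finally show ?thesis by simp
qed

locale finite_partial_action = partial_action G G0 src tgt cmp ginv one alpha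
  for G G0 :: "'g set"
    and src tgt :: "'g \<Rightarrow> 'g"
    and cmp :: "'g \<Rightarrow> 'g \<Rightarrow> 'g"
    and ginv :: "'g \<Rightarrow> 'g"
    and one :: "'g \<Rightarrow> 'a::ring_1"
    and alpha :: "'g \<Rightarrow> 'a \<Rightarrow> 'a" +
  assumes finite_G: "finite G"
begin

abbreviation S where "S \<equiv> skew_carrier G one"
abbreviation mul where "mul \<equiv> skew_mult G src tgt cmp ginv alpha"
abbreviation emb where "emb \<equiv> skew_embed G0 one"

lemma skew_carrier_zero: "0 \<in> S"
  unfolding skew_carrier_def using ideal_zero by auto

lemma skew_carrier_add: "f \<in> S \<Longrightarrow> h \<in> S \<Longrightarrow> f + h \<in> S"
  unfolding skew_carrier_def using ideal_add by auto

lemma skew_delta_in_carrier: "g \<in> G \<Longrightarrow> y \<in> I g \<Longrightarrow> skew_delta g y \<in> S"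
  unfolding skew_carrier_def skew_delta_def using ideal_zero by auto

lemma skew_carrier_in_ideal: "s \<in> S \<Longrightarrow> h \<in> G \<Longrightarrow> s h \<in> I h"
  unfolding skew_carrier_def by auto

lemma skew_mult_eq_sum:
  "mul f h = (\<Sum>p\<in>{p\<in>G \<times> G. src (fst p) = tgt (snd p)}.
      skew_delta (cmp (fst p) (snd p)) (alpha (fst p) (alpha (ginv (fst p)) (f (fst p)) * h (snd p))))"
proof (rule ext)
  fix k
  let ?P = "{p\<in>G \<times> G. src (fst p) = tgt (snd p)}"
    and ?c = "\<lambda>p. alpha (fst p) (alpha (ginv (fst p)) (f (fst p)) * h (snd p))"
  have "finite ?P" using finite_G by (auto intro: finite_subset[of _ "G \<times> G"])
  have "(\<Sum>p\<in>?P. skew_delta (cmp (fst p) (snd p)) (?c p)) k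
      = (\<Sum>p\<in>?P. if cmp (fst p) (snd p) = k then ?c p else 0)"
    unfolding sum_fun_apply skew_delta_def by (intro sum.cong) auto
  also have "\<dots> = (\<Sum>p\<in>{p\<in>?P. cmp (fst p) (snd p) = k}. ?c p)"
    by (simp only: sum.inter_filter[OF \<open>finite ?P\<close>])
  also have "\<dots> = mul f h k"
    unfolding skew_mult_def by (intro sum.cong) auto
  finally show "mul f h k = (\<Sum>p\<in>?P. skew_delta (cmp (fst p) (snd p)) (?c p)) k" by simp
qed

lemma skew_mult_delta_right:
  assumes g: "g \<in> G"
  shows "mul f (skew_delta g x) = (\<Sum>h\<in>{h\<in>G. src h = tgt g}.
           skew_delta (cmp h g) (alpha h (alpha (ginv h) (f h) * x)))"
proof -
  let ?P = "{p\<in>G \<times> G. src (fst p) = tgt (snd p)}"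
  let ?F = "\<lambda>p. skew_delta (cmp (fst p) (snd p))
              (alpha (fst p) (alpha (ginv (fst p)) (f (fst p)) * skew_delta g x (snd p)))"
  have fP: "finite ?P" using finite_G by (auto intro: finite_subset[of _ "G \<times> G"])
  have "mul f (skew_delta g x) = (\<Sum>p\<in>?P. if snd p = g then ?F p else 0)"
    unfolding skew_mult_eq_sum by (intro sum.cong) (auto simp: skew_delta_def alpha_zero)
  also have "\<dots> = (\<Sum>p\<in>{p\<in>?P. snd p = g}. ?F p)"
    by (simp only: sum.inter_filter[OF fP])
  also have "\<dots> = (\<Sum>h\<in>{h\<in>G. src h = tgt g}. skew_delta (cmp h g) (alpha h (alpha (ginv h) (f h) * x)))"
    by (rule sum.reindex_bij_witness[where i = "\<lambda>h. (h, g)" and j = fst]) (auto simp: g skew_delta_def)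
  finally show ?thesis .
qed

lemma skew_mult_delta_left:
  assumes g: "g \<in> G"
  shows "mul (skew_delta g x) f = (\<Sum>h\<in>{h\<in>G. tgt h = src g}.
           skew_delta (cmp g h) (alpha g (alpha (ginv g) x * f h)))"
proof -
  let ?P = "{p\<in>G \<times> G. src (fst p) = tgt (snd p)}"
  let ?F = "\<lambda>p. skew_delta (cmp (fst p) (snd p))
              (alpha (fst p) (alpha (ginv (fst p)) (skew_delta g x (fst p)) * f (snd p)))"
  have fP: "finite ?P" using finite_G by (auto intro: finite_subset[of _ "G \<times> G"])
  have "mul (skew_delta g x) f = (\<Sum>p\<in>?P. if fst p = g then ?F p else 0)"
    unfolding skew_mult_eq_sum by (intro sum.cong) (auto simp: skew_delta_def alpha_zero ginv_in)
  also have "\<dots> = (\<Sum>p\<in>{p\<in>?P. fst p = g}. ?F p)"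
    by (simp only: sum.inter_filter[OF fP])
  also have "\<dots> = (\<Sum>h\<in>{h\<in>G. tgt h = src g}. skew_delta (cmp g h) (alpha g (alpha (ginv g) x * f h)))"
    by (rule sum.reindex_bij_witness[where i = "\<lambda>h. (g, h)" and j = snd]) (auto simp: g skew_delta_def)
  finally show ?thesis .
qed

lemma skew_embed_mult_delta:
  assumes l: "l \<in> G" and d: "d \<in> I l"
  shows "mul (emb d) (skew_delta l (one l)) = skew_delta l d"
proof -
  let ?e = "tgt l"
  have e: "?e \<in> G0" and eG: "?e \<in> G" using tgt_in l obj_in by auto
  let ?f = "\<lambda>h. skew_delta (cmp h l) (alpha h (alpha (ginv h) (emb d h) * one l))"
  have "mul (emb d) (skew_delta l (one l)) = (\<Sum>h\<in>{h\<in>G. src h = ?e}. ?f h)"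
    by (rule skew_mult_delta_right[OF l])
  also have "\<dots> = ?f ?e"
  proof (rule sum_eq_single)
    fix h assume "h \<in> {h\<in>G. src h = ?e}" "h \<noteq> ?e"
    then show "?f h = 0" using src_obj by (auto simp: skew_embed_def alpha_zero ginv_in)
  qed (use finite_G eG src_obj e in auto)
  also have "\<dots> = skew_delta l d"
  proof -
    have de: "d * one ?e \<in> I ?e" using mult_one_in_ideal[OF eG] .
    have "d * one ?e = d" using ideal_subset_tgt[OF l] d ideal_iff[OF eG] by auto
    then show ?thesis
      using e de alpha_obj[OF e] ginv_obj[OF e] ideal_iff[OF l] d cmp_tgt_left[OF l]
        ideal_mult_right[OF eG de] by (simp add: skew_embed_def)
  qed
  finally show ?thesis .
qed

lemma skew_delta_mult_embed:
  assumes g: "g \<in> G" and d: "d \<in> I (ginv g)"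
  shows "mul (skew_delta g x) (emb d) = skew_delta g (alpha g (alpha (ginv g) x * d))"
proof -
  let ?e = "src g"
  have e: "?e \<in> G0" and eG: "?e \<in> G" using src_in g obj_in by auto
  let ?f = "\<lambda>h. skew_delta (cmp g h) (alpha g (alpha (ginv g) x * emb d h))"
  have "mul (skew_delta g x) (emb d) = (\<Sum>h\<in>{h\<in>G. tgt h = ?e}. ?f h)"
    by (rule skew_mult_delta_left[OF g])
  also have "\<dots> = ?f ?e"
  proof (rule sum_eq_single)
    fix h assume "h \<in> {h\<in>G. tgt h = ?e}" "h \<noteq> ?e"
    then show "?f h = 0" using tgt_obj by (auto simp: skew_embed_def alpha_zero g)
  qed (use finite_G eG tgt_obj e in auto)
  also have "\<dots> = skew_delta g (alpha g (alpha (ginv g) x * d))"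
    using ideal_ginv_subset_src[OF g d] e ideal_iff[OF eG] cmp_src_right[OF g]
    by (simp add: skew_embed_def)
  finally show ?thesis .
qed

end

section \<open>The separability idempotent\<close>

context finite_partial_action
begin

definition trace_coeff where
  "trace_coeff a g = alpha g (a * one (ginv g))"

lemma trace_coeff_in: "g \<in> G \<Longrightarrow> trace_coeff a g \<in> I g"
  unfolding trace_coeff_def using alpha_in mult_one_in_ideal ginv_in by blast

lemma trace_j_eq_sum: "trace_j G G0 src tgt ginv one alpha j a = (\<Sum>l\<in>{l\<in>G. tgt l = j}. trace_coeff a l)"
proof -
  have "finite G0" using finite_G G0_subset finite_subset by blast
  moreover have "src ` {l\<in>G. tgt l = j} \<subseteq> G0" using src_in by auto
  ultimately have "(\<Sum>l\<in>{l\<in>G. tgt l = j}. trace_coeff a l) =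
     (\<Sum>e\<in>G0. \<Sum>l\<in>{x. x \<in> {l\<in>G. tgt l = j} \<and> src x = e}. trace_coeff a l)"
    using sum.group[of "{l\<in>G. tgt l = j}" G0 src "trace_coeff a"] finite_G by simp
  also have "\<dots> = trace_j G G0 src tgt ginv one alpha j a"
    unfolding trace_j_def trace_ij_def hom_set_def trace_coeff_def
    by (rule sum.cong) (auto intro!: sum.cong)
  finally show ?thesis by simp
qed

lemma trace_coeff_cmp:
  assumes h: "h \<in> G" and g: "g \<in> G" and st: "src h = tgt g" and q: "q \<in> I h"
  shows "alpha h (alpha (ginv h) q * trace_coeff a g) = q * trace_coeff a (cmp h g)"
proof -
  have hi: "ginv h \<in> G" using ginv_in h by blast
  let ?p = "alpha (ginv h) q" and ?b = "trace_coeff a g * one (ginv h)"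
  have p: "?p \<in> I (ginv h)" using alpha_ginv_in[OF h q] .
  have "?p * trace_coeff a g = ?p * one (ginv h) * trace_coeff a g"
    using ideal_iff[OF hi] p by simp
  also have "\<dots> = ?p * ?b"
    using one_central[OF hi, of "trace_coeff a g"] by (simp add: mult.assoc)
  finally have "?p * trace_coeff a g = ?p * ?b" .
  then have "alpha h (?p * trace_coeff a g) = q * (trace_coeff a (cmp h g) * one h)"
    using alpha_mult[OF h p mult_one_in_ideal[OF hi]] alpha_alpha_ginv[OF h q]
      alpha_alpha_restrict[OF h g st] by (simp add: trace_coeff_def)
  also have "\<dots> = q * one h * trace_coeff a (cmp h g)"
    using one_central[OF h, of "trace_coeff a (cmp h g)"] by (simp add: mult.assoc)
  also have "\<dots> = q * trace_coeff a (cmp h g)"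
    using ideal_iff[OF h] q by simp
  finally show ?thesis .
qed

lemma trace_j_transport:
  assumes tk: "trace_j G G0 src tgt ginv one alpha (src g) a = one (src g)"
    and g: "g \<in> G" and og: "one g = one (tgt g)"
  shows "trace_j G G0 src tgt ginv one alpha (tgt g) a = one (tgt g)"
proof -
  let ?K = "{h\<in>G. tgt h = src g}"
  have gi: "ginv g \<in> G" and kG: "src g \<in> G" and jG: "tgt g \<in> G"
    using ginv_in src_in tgt_in obj_in g by auto
  have "one (ginv g) \<in> I (src g)" using ideal_ginv_subset_src[OF g one_in_ideal[OF gi]] .
  then have "one (ginv g) = one (src g) * one (ginv g)"
    using ideal_iff[OF kG] one_central[OF kG, of "one (ginv g)"] by simp
  then have "one (tgt g) = alpha g (one (src g) * one (ginv g))"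
    using alpha_one[OF g] og by simp
  also have "\<dots> = alpha g ((\<Sum>h\<in>?K. trace_coeff a h) * one (ginv g))"
    using tk unfolding trace_j_eq_sum by simp
  also have "\<dots> = (\<Sum>h\<in>?K. alpha g (trace_coeff a h * one (ginv g)))"
    by (simp add: sum_distrib_right alpha_sum[OF g] finite_G mult_one_in_ideal[OF gi])
  also have "\<dots> = (\<Sum>h\<in>?K. trace_coeff a (cmp g h))"
  proof (rule sum.cong)
    fix h assume "h \<in> ?K"
    then have h: "h \<in> G" and st: "src g = tgt h" by auto
    have "trace_coeff a (cmp g h) \<in> I (tgt g)"
      using trace_coeff_in[OF cmp_in[OF g h st]] ideal_subset_tgt[OF cmp_in[OF g h st]] tgt_cmp[OF g h st]
      by auto
    then show "alpha g (trace_coeff a h * one (ginv g)) = trace_coeff a (cmp g h)"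
      using alpha_alpha_restrict[OF g h st] og ideal_iff[OF jG] by (simp add: trace_coeff_def)
  qed simp
  also have "\<dots> = (\<Sum>l\<in>{l\<in>G. tgt l = tgt g}. trace_coeff a l)"
    by (rule sum_reindex_cmp_left[OF g])
  finally show ?thesis using trace_j_eq_sum by simp
qed

definition sep_left where
  "sep_left a g = skew_delta g (trace_coeff a g)"

definition sep_right where
  "sep_right g = skew_delta (ginv g) (one (ginv g))"

lemma sep_left_in: "g \<in> G \<Longrightarrow> sep_left a g \<in> S"
  unfolding sep_left_def using skew_delta_in_carrier trace_coeff_in by blast

lemma sep_right_in: "g \<in> G \<Longrightarrow> sep_right g \<in> S"
  unfolding sep_right_def using skew_delta_in_carrier one_in_ideal ginv_in by blast

lemma skew_mult_sep: 
  assumes g: "g \<in> G"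
  shows "mul (sep_left a g) (sep_right g) = skew_delta (tgt g) (trace_coeff a g)"
proof -
  let ?f = "\<lambda>h. skew_delta (cmp g h) (alpha g (alpha (ginv g) (trace_coeff a g) * sep_right g h))"
  have "mul (sep_left a g) (sep_right g) = (\<Sum>h\<in>{h\<in>G. tgt h = src g}. ?f h)"
    unfolding sep_left_def by (rule skew_mult_delta_left[OF g])
  also have "\<dots> = ?f (ginv g)"
  proof (rule sum_eq_single)
    fix h assume "h \<noteq> ginv g"
    then show "?f h = 0" by (simp add: sep_right_def skew_delta_def alpha_zero g zero_fun_def)
  qed (use finite_G ginv_in g tgt_ginv in auto)
  also have "\<dots> = skew_delta (tgt g) (trace_coeff a g)"
    using alpha_ginv_in[OF g trace_coeff_in[OF g]] ideal_iff[OF ginv_in[OF g]]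
      alpha_alpha_ginv[OF g trace_coeff_in[OF g]] cmp_ginv_right[OF g]
    by (simp add: sep_right_def skew_delta_def)
  finally show ?thesis .
qed

lemma sum_skew_mult_sep:
  assumes "\<forall>j\<in>G0. \<exists>g\<in>hom_set G src tgt k j. one g = one j"
    and "trace_j G G0 src tgt ginv one alpha k a = one k"
  shows "(\<Sum>g\<in>G. mul (sep_left a g) (sep_right g)) = skew_one G0 one"
proof (rule ext)
  fix e
  have "(\<Sum>g\<in>G. mul (sep_left a g) (sep_right g)) e = (\<Sum>g\<in>G. if tgt g = e then trace_coeff a g else 0)"
    unfolding sum_fun_apply by (rule sum.cong) (auto simp: skew_mult_sep skew_delta_def)
  also have "\<dots> = trace_j G G0 src tgt ginv one alpha e a"
    by (simp add: sum.inter_filter[OF finite_G] trace_j_eq_sum)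
  also have "\<dots> = skew_one G0 one e"
  proof (cases "e \<in> G0")
    case True
    then obtain g where "g \<in> G" "src g = k" "tgt g = e" "one g = one e"
      using assms(1) unfolding hom_set_def by blast
    then show ?thesis using trace_j_transport assms(2) True by (force simp: skew_one_def)
  next
    case False
    then have none: "{g\<in>G. tgt g = e} = {}" using tgt_in by auto
    show ?thesis using False unfolding trace_j_eq_sum skew_one_def none by simp
  qed
  finally show "(\<Sum>g\<in>G. mul (sep_left a g) (sep_right g)) e = skew_one G0 one e" .
qed

abbreviation T where "T \<equiv> tensor_rel S (range emb) (+) mul"

definition tensor_middle where
  "tensor_middle s a g h =
     delta2 (skew_delta g (s h * trace_coeff a g), skew_delta (cmp (ginv g) h) (one (cmp (ginv g) h)))"

lemma tensor_rel_mult_sep_left: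
  assumes s: "s \<in> S" and g: "g \<in> G"
  shows "delta2 (mul s (sep_left a g), sep_right g)
       - (\<Sum>h\<in>{h\<in>G. src h = tgt g}. tensor_middle s a (cmp h g) h) \<in> T"
proof -
  let ?H = "{h\<in>G. src h = tgt g}" and ?x = "\<lambda>h. skew_delta (cmp h g) (s h * trace_coeff a (cmp h g))"
  have "mul s (sep_left a g) = (\<Sum>h\<in>?H. skew_delta (cmp h g) (alpha h (alpha (ginv h) (s h) * trace_coeff a g)))"
    unfolding sep_left_def by (rule skew_mult_delta_right[OF g])
  also have "\<dots> = sum ?x ?H"
    by (rule sum.cong) (auto simp: trace_coeff_cmp g skew_carrier_in_ideal[OF s])
  finally have m: "mul s (sep_left a g) = sum ?x ?H" .
  have x: "?x h \<in> S" if "h \<in> ?H" for h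
    using that skew_delta_in_carrier cmp_in g ideal_mult_left trace_coeff_in by auto
  have middle: "(\<Sum>h\<in>?H. tensor_middle s a (cmp h g) h) = (\<Sum>h\<in>?H. delta2 (?x h, sep_right g))"
    using ginv_cmp_cmp[OF g] unfolding tensor_middle_def sep_right_def by (intro sum.cong) auto
  show ?thesis unfolding m middle
    by (rule tensor_rel_sum_left[OF skew_carrier_zero skew_carrier_add _ x sep_right_in[OF g]])
      (use finite_G in auto)
qed

context
  fixes a :: 'a
  assumes a_central: "central a"
begin

lemma trace_coeff_central: "g \<in> G \<Longrightarrow> trace_coeff a g * y = y * trace_coeff a g"
  unfolding trace_coeff_def
proof (rule alpha_central)
  fix y
  assume g: "g \<in> G"
  show "a * one (ginv g) \<in> I (ginv g)" using mult_one_in_ideal ginv_in g by blast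
  have "a * one (ginv g) * y = a * y * one (ginv g)"
    using one_central[OF ginv_in[OF g], of y] by (simp add: mult.assoc)
  also have "\<dots> = y * (a * one (ginv g))"
    using a_central unfolding central_def by (simp add: mult.assoc)
  finally show "a * one (ginv g) * y = y * (a * one (ginv g))" .
qed

lemma tensor_rel_move_coeff:
  assumes s: "s \<in> S" and g: "g \<in> G" and h: "h \<in> G" and t: "tgt h = tgt g"
  defines "l \<equiv> cmp (ginv g) h" and "d \<equiv> alpha (ginv g) (one g * s h)"
  shows "tensor_middle s a g h - delta2 (sep_left a g, skew_delta l d) \<in> T"
proof -
  have gi: "ginv g \<in> G" using ginv_in g by blast
  have lG: "l \<in> G" unfolding l_def using cmp_in[OF gi h] src_ginv[OF g] t by simp
  have sh: "s h \<in> I h" using skew_carrier_in_ideal[OF s h] .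
  have gs: "one g * s h \<in> I g" using ideal_mult_right[OF g one_in_ideal[OF g]] .
  have dl: "d \<in> I l" unfolding d_def l_def using alpha_ginv_in_cmp[OF g h t sh] .
  have dg: "d \<in> I (ginv g)" unfolding d_def using alpha_ginv_in[OF g gs] .
  have "mul (sep_left a g) (emb d) = skew_delta g (alpha g (alpha (ginv g) (trace_coeff a g) * d))"
    unfolding sep_left_def by (rule skew_delta_mult_embed[OF g dg])
  also have "alpha g (alpha (ginv g) (trace_coeff a g) * d) = trace_coeff a g * (one g * s h)"
    unfolding d_def
    using alpha_mult[OF g alpha_ginv_in[OF g trace_coeff_in[OF g, of a]] alpha_ginv_in[OF g gs]]
      alpha_alpha_ginv[OF g trace_coeff_in[OF g, of a]] alpha_alpha_ginv[OF g gs] by simp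
  also have "trace_coeff a g * (one g * s h) = s h * trace_coeff a g"
    using ideal_iff[OF g] trace_coeff_in[OF g] trace_coeff_central[OF g]
    by (simp add: mult.assoc[symmetric])
  finally have "mul (sep_left a g) (emb d) = skew_delta g (s h * trace_coeff a g)" .
  moreover have "mul (emb d) (skew_delta l (one l)) = skew_delta l d"
    by (rule skew_embed_mult_delta[OF lG dl])
  moreover have "delta2 (mul (sep_left a g) (emb d), skew_delta l (one l))
       - delta2 (sep_left a g, mul (emb d) (skew_delta l (one l))) \<in> T"
    by (rule tensor_rel.balanced[OF sep_left_in[OF g] skew_delta_in_carrier[OF lG one_in_ideal[OF lG]]])
      simp
  ultimately show ?thesis unfolding tensor_middle_def l_def by simp
qed

lemma tensor_rel_sep_mult_right:
  assumes s: "s \<in> S" and g: "g \<in> G"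
  shows "delta2 (sep_left a g, mul (sep_right g) s)
       - (\<Sum>h\<in>{h\<in>G. tgt h = tgt g}. tensor_middle s a g h) \<in> T"
proof -
  let ?H = "{h\<in>G. tgt h = tgt g}" and ?l = "\<lambda>h. cmp (ginv g) h"
  let ?x = "\<lambda>h. skew_delta (?l h) (alpha (ginv g) (one g * s h))"
  have gi: "ginv g \<in> G" using ginv_in g by blast
  have "mul (sep_right g) s = (\<Sum>h\<in>{h\<in>G. tgt h = src (ginv g)}.
          skew_delta (?l h) (alpha (ginv g) (alpha (ginv (ginv g)) (one (ginv g)) * s h)))"
    unfolding sep_right_def by (rule skew_mult_delta_left[OF gi])
  then have m: "mul (sep_right g) s = sum ?x ?H"
    using src_ginv[OF g] ginv_ginv[OF g] alpha_one[OF g] by simp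
  have x: "?x h \<in> S" if "h \<in> ?H" for h
    using that skew_delta_in_carrier cmp_in[OF gi] src_ginv[OF g] alpha_ginv_in_cmp[OF g]
      skew_carrier_in_ideal[OF s] by auto
  have "delta2 (sep_left a g, sum ?x ?H) - (\<Sum>h\<in>?H. delta2 (sep_left a g, ?x h)) \<in> T"
    (is "?u - ?w \<in> T")
    by (rule tensor_rel_sum_right[OF skew_carrier_zero skew_carrier_add _ x sep_left_in[OF g]])
      (use finite_G in auto)
  moreover have "(\<Sum>h\<in>?H. tensor_middle s a g h) - ?w \<in> T"
    unfolding sum_subtractf[symmetric]
    by (rule sum_in_tensor_rel) (use finite_G tensor_rel_move_coeff[OF s g] in auto)
  ultimately show ?thesis
    unfolding m by (rule tensor_rel_diff_cancel)
qed

lemma tensor_rel_sep_commute: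
  assumes s: "s \<in> S"
  shows "(\<Sum>g\<in>G. delta2 (mul s (sep_left a g), sep_right g))
       - (\<Sum>g\<in>G. delta2 (sep_left a g, mul (sep_right g) s)) \<in> T"
proof -
  let ?M = "\<Sum>g\<in>G. \<Sum>h\<in>{h\<in>G. tgt h = tgt g}. tensor_middle s a g h"
  have "(\<Sum>g\<in>G. delta2 (mul s (sep_left a g), sep_right g)) - ?M \<in> T"
    unfolding sum_composable_reindex[OF finite_G, symmetric] sum_subtractf[symmetric]
    by (rule sum_in_tensor_rel[OF finite_G tensor_rel_mult_sep_left[OF s]])
  moreover have "(\<Sum>g\<in>G. delta2 (sep_left a g, mul (sep_right g) s)) - ?M \<in> T"
    unfolding sum_subtractf[symmetric]
    by (rule sum_in_tensor_rel[OF finite_G tensor_rel_sep_mult_right[OF s]])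
  ultimately show ?thesis by (rule tensor_rel_diff_cancel)
qed

end

end

lemma (in finite_partial_action) separable_extension_skew:
  assumes a: "central a" and k: "k \<in> G0"
    and tk: "trace_j G G0 src tgt ginv one alpha k a = one k"
    and reach: "\<forall>j\<in>G0. \<exists>g\<in>hom_set G src tgt k j. one g = one j"
  shows "separable_extension S skew_add mul skew_zero (skew_one G0 one) (range emb)"
proof -
  obtain L where L: "distinct L" "set L = G" using finite_distinct_list[OF finite_G] by blast
  let ?xs = "map (\<lambda>g. (sep_left a g, sep_right g)) L"
  have sums: "sum_list (map f L) = sum f G" for f :: "'g \<Rightarrow> 'x::comm_monoid_add"
    using sum_list_distinct_conv_sum_set[OF L(1)] L(2) by simp
  have "set ?xs \<subseteq> S \<times> S" using L sep_left_in sep_right_in by auto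
  moreover have "tensor_mult_map skew_add mul skew_zero ?xs = skew_one G0 one"
    using sum_skew_mult_sep[OF reach tk] unfolding tensor_mult_map_skew by (simp add: o_def sums)
  moreover have "tensor_eq S (range emb) skew_add mul
                  (map (\<lambda>p. (mul s (fst p), snd p)) ?xs)
                  (map (\<lambda>p. (fst p, mul (snd p) s)) ?xs)" if "s \<in> S" for s
    using tensor_rel_sep_commute[OF a that]
    unfolding tensor_eq_def skew_add_eq_plus formal_sum_conv_sum_list by (simp add: o_def sums)
  ultimately show ?thesis unfolding separable_extension_def by blast
qed

theorem corollary3p5:
  fixes G G0 :: "'g set"
    and src tgt ginv :: "'g \<Rightarrow> 'g"
    and cmp :: "'g \<Rightarrow> 'g \<Rightarrow> 'g"
    and one :: "'g \<Rightarrow> 'a::ring_1"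
    and alpha :: "'g \<Rightarrow> 'a \<Rightarrow> 'a"
  assumes grp: "groupoid G G0 src tgt cmp ginv"
    and fin: "finite G"
    and conn: "connected_groupoid G G0 src tgt"
    and dsum: "direct_sum_decomp G0 one"
    and act: "unital_partial_action G G0 src tgt cmp ginv one alpha"
    and hyp: "\<exists>a k. central a \<and> k \<in> G0 \<and> trace_j G G0 src tgt ginv one alpha k a = one k \<and>
                  (\<forall>j\<in>G0. \<exists>g\<in>hom_set G src tgt k j. one g = one j)"
  shows "separable_extension (skew_carrier G one) skew_add (skew_mult G src tgt cmp ginv alpha)
           skew_zero (skew_one G0 one) (range (skew_embed G0 one))"
proof -
  interpret finite_partial_action G G0 src tgt cmp ginv one alpha
    using grp act fin by unfold_locales
  from hyp show ?thesis using separable_extension_skew by blast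
qed

end
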